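(* Let $q>1$, $0<u<1$ and let $k\ge1$ be an integer. Then \[ \sum_{\lambda:\lambda'_1=k}N_{u,q}(\lambda)=\frac{u^{k-1}}{|A(k-1,q)|}\cdot\frac{\prod_{r=1}^\infty(1-u/q^r)}{\prod_{r=1}^k(1-u/q^r)}, \] the sum being over partitions with exactly $k$ parts.
   Context: $|A(k-1,q)|=q^{k-1}\prod_{i=0}^{k-2}(q^{k-1}-q^i)$ (the order of the affine group $A(k-1,q)$ when $q$ is a prime power). $\lambda'_1$ is the number of parts of $\lambda$. $N_{u,q}(\lambda)=\prod_{r\ge1}(1-u/q^r)\frac{u^{|\lambda|-1}(q^{\lambda'_1}-1)}{\prod_i q^{(\lambda'_i)^2}(\frac1q)_{m_i(\lambda)}}$ for partitions of positive integers, with $\lambda'$ the conjugate partition, $m_i(\lambda)$ the multiplicity of part $i$, $(\frac1q)_i=\prod_{j=1}^i(1-q^{-j})$. *)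

theory Defs
  imports "HOL-Analysis.Analysis" "HOL-Library.Multiset"
begin

text \<open>A partition is represented as the multiset of its (positive) parts.\<close>
definition is_partition :: "nat multiset \<Rightarrow> bool" where
  "is_partition lam \<longleftrightarrow> 0 \<notin># lam"

definition psize :: "nat multiset \<Rightarrow> nat" where
  "psize lam = sum_mset lam"

text \<open>Conjugate partition: the i-th part of the conjugate is the number of parts \<ge> i.\<close>
definition conj_part :: "nat multiset \<Rightarrow> nat \<Rightarrow> nat" where
  "conj_part lam i = size (filter_mset (%x. i \<le> x) lam)"

definition mult_part :: "nat multiset \<Rightarrow> nat \<Rightarrow> nat" where
  "mult_part lam i = count lam i"

definition qpoch_inv :: "real \<Rightarrow> nat \<Rightarrow> real" where
  "qpoch_inv q i = (\<Prod>j=1..i. 1 - 1 / q ^ j)"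

definition Pinf :: "real \<Rightarrow> real \<Rightarrow> real" where
  "Pinf u q = (\<Prod>r. 1 - u / q ^ Suc r)"

text \<open>N_{u,q}(lambda). Products over i range over i = 1..(largest part);
  for larger i the factors equal 1.\<close>
definition N_uq :: "real \<Rightarrow> real \<Rightarrow> nat multiset \<Rightarrow> real" where
  "N_uq u q lam = Pinf u q * (u ^ (psize lam - 1) * (q ^ conj_part lam 1 - 1)) /
     (\<Prod>i\<in>{1..Max_mset lam}. q ^ ((conj_part lam i)\<^sup>2) * qpoch_inv q (mult_part lam i))"

definition affine_order :: "nat \<Rightarrow> real \<Rightarrow> real" where
  "affine_order n q = q ^ n * (\<Prod>i<n. q ^ n - q ^ i)"

end

(*
  Write t = 1/q.  Up to the factor Pinf u q * (q^k - 1) / u, N_{u,q}(lambda) is the weight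
  w(lambda) = u^|lambda| / prod_i q^((lambda'_i)^2) (t;t)_{m_i(lambda)}.  Removing the a columns of
  height k from a partition lambda with k parts, a its smallest part, leaves a partition mu with
  j < k parts, and w(lambda) = x^a w(mu) / (t;t)_{k-j} with x = u^k t^(k^2).  Summing the geometric
  series over a, the total weight G_k of partitions with k parts satisfies
  G_k = x/(1-x) * sum_{j<k} G_j / (t;t)_{k-j}.  By induction on k, G_k equals
  u^k t^(k^2) / ((t;t)_k (ut;t)_k), which satisfies the same recursion because of the
  q-binomial identity sum_j [k choose j]_t a^j t^(j^2) (a t^(j+1);t)_{k-j} = 1.
  Finally (q^k - 1) |A(k-1,q)| = q^(k^2) (t;t)_k.
*)
theory Submission
  imports Defs
begin

text \<open>In q-series notation \<open>qpoch t n = (t;t)\<^sub>n\<close>,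
  \<open>qpoch_shift t a j k = (a t\<^bsup>j+1\<^esup>;t)\<^sub>k\<^sub>-\<^sub>j\<close>, and \<open>qbinom t n j\<close> is the
  Gaussian binomial coefficient, defined by the q-Pascal rule.\<close>

definition qpoch :: "'a::comm_ring_1 \<Rightarrow> nat \<Rightarrow> 'a" where
  "qpoch t n = (\<Prod>j=1..n. 1 - t ^ j)"

definition qpoch_shift :: "'a::comm_ring_1 \<Rightarrow> 'a \<Rightarrow> nat \<Rightarrow> nat \<Rightarrow> 'a" where
  "qpoch_shift t a j k = (\<Prod>r\<in>{Suc j..k}. 1 - a * t ^ r)"

fun qbinom :: "'a::comm_ring_1 \<Rightarrow> nat \<Rightarrow> nat \<Rightarrow> 'a" where
  "qbinom t n 0 = 1"
| "qbinom t 0 (Suc j) = 0"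
| "qbinom t (Suc n) (Suc j) = qbinom t n (Suc j) + t ^ (n - j) * qbinom t n j"

lemma qpoch_0 [simp]: "qpoch t 0 = 1"
  by (simp add: qpoch_def)

lemma qpoch_Suc: "qpoch t (Suc n) = qpoch t n * (1 - t ^ Suc n)"
  by (simp add: qpoch_def prod.nat_ivl_Suc')

lemma qpoch_shift_self [simp]: "qpoch_shift t a k k = 1"
  by (simp add: qpoch_shift_def)

lemma qpoch_shift_Suc:
  "j \<le> k \<Longrightarrow> qpoch_shift t a j (Suc k) = qpoch_shift t a j k * (1 - a * t ^ Suc k)"
  unfolding qpoch_shift_def by (subst prod.nat_ivl_Suc') auto

lemma qpoch_shift_Suc_Suc: "qpoch_shift t a (Suc j) (Suc k) = qpoch_shift t (a * t) j k"
  unfolding qpoch_shift_def by (subst prod.shift_bounds_cl_Suc_ivl) (simp add: mult.assoc)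

lemma qpoch_shift_split:
  "i \<le> j \<Longrightarrow> j \<le> k \<Longrightarrow> qpoch_shift t a i k = qpoch_shift t a i j * qpoch_shift t a j k"
  unfolding qpoch_shift_def by (subst prod.union_disjoint[symmetric]) (auto intro!: prod.cong)

lemma qbinom_eq_0: "n < j \<Longrightarrow> qbinom t n j = 0"
proof (induction n arbitrary: j)
  case 0
  then show ?case by (cases j) auto
next
  case (Suc n)
  then show ?case by (cases j) auto
qed

lemma qbinom_self [simp]: "qbinom t n n = 1"
  by (induction n) (auto simp: qbinom_eq_0)

lemma qbinom_mult_qpoch: "j \<le> n \<Longrightarrow> qbinom t n j * qpoch t j * qpoch t (n - j) = qpoch t n"
proof (induction n arbitrary: j)
  case 0
  then show ?case by simp
next
  case (Suc n)
  show ?case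
  proof (cases j)
    case 0
    then show ?thesis by simp
  next
    case (Suc i)
    show ?thesis
    proof (cases "i = n")
      case True
      then show ?thesis using \<open>j = Suc i\<close> by simp
    next
      case False
      then obtain d where n: "n = Suc (i + d)"
        using Suc.prems \<open>j = Suc i\<close> by (metis Suc_le_mono le_neq_implies_less less_imp_Suc_add)
      have hi: "qbinom t n (Suc i) * qpoch t (Suc i) * qpoch t d = qpoch t n"
        using Suc.IH[of "Suc i"] n by simp
      have lo: "qbinom t n i * qpoch t i * qpoch t (Suc d) = qpoch t n"
        using Suc.IH[of i] n by (simp add: Suc_diff_le)
      have "qbinom t (Suc n) j * qpoch t j * qpoch t (Suc n - j)
          = qbinom t n (Suc i) * qpoch t (Suc i) * qpoch t d * (1 - t ^ Suc d)
            + t ^ Suc d * (qbinom t n i * qpoch t i * qpoch t (Suc d)) * (1 - t ^ Suc i)"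
        using \<open>j = Suc i\<close> n by (simp add: qpoch_Suc algebra_simps)
      also have "\<dots> = qpoch t n * (1 - t ^ Suc n)"
        unfolding hi lo using n by (simp add: algebra_simps power_add)
      finally show ?thesis by (simp only: qpoch_Suc)
    qed
  qed
qed

lemma sum_qbinom_qpoch_shift:
  "(\<Sum>j\<le>k. qbinom t k j * a ^ j * t ^ j\<^sup>2 * qpoch_shift t a j k) = 1"
proof (induction k arbitrary: a)
  case 0
  then show ?case by simp
next
  case (Suc k)
  define S where "S b = (\<Sum>j\<le>k. qbinom t k j * b ^ j * t ^ j\<^sup>2 * qpoch_shift t b j k)" for b
  define A where "A j = qbinom t k j * a ^ j * t ^ j\<^sup>2 * qpoch_shift t a j (Suc k)" for j
  define B where
    "B i = t ^ (k - i) * qbinom t k i * a ^ Suc i * t ^ (Suc i)\<^sup>2 * qpoch_shift t a (Suc i) (Suc k)"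
    for i
  have "(\<Sum>j\<le>Suc k. qbinom t (Suc k) j * a ^ j * t ^ j\<^sup>2 * qpoch_shift t a j (Suc k))
      = A 0 + (\<Sum>i\<le>k. A (Suc i) + B i)"
    unfolding sum.atMost_Suc_shift A_def B_def by (simp add: algebra_simps)
  also have "\<dots> = (\<Sum>j\<le>Suc k. A j) + (\<Sum>i\<le>k. B i)"
    by (simp only: sum.distrib sum.atMost_Suc_shift add.assoc)
  also have "(\<Sum>j\<le>Suc k. A j) = (1 - a * t ^ Suc k) * S a"
    by (simp add: A_def S_def qbinom_eq_0 qpoch_shift_Suc sum_distrib_left
        mult.commute mult.left_commute)
  also have "(\<Sum>i\<le>k. B i) = a * t ^ Suc k * S (a * t)"
    unfolding S_def sum_distrib_left
  proof (intro sum.cong refl)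
    fix i assume "i \<in> {..k}"
    then obtain d where k: "k = i + d" using le_Suc_ex by auto
    show "B i = a * t ^ Suc k * (qbinom t k i * (a * t) ^ i * t ^ i\<^sup>2 * qpoch_shift t (a * t) i k)"
      unfolding B_def qpoch_shift_Suc_Suc k
      by (simp add: power2_eq_square power_add algebra_simps)
  qed
  also have "(1 - a * t ^ Suc k) * S a + a * t ^ Suc k * S (a * t) = 1"
    unfolding S_def Suc.IH by simp
  finally show ?case .
qed

definition partitions_gf :: "'a::field \<Rightarrow> 'a \<Rightarrow> nat \<Rightarrow> 'a" where
  "partitions_gf t a k = a ^ k * t ^ k\<^sup>2 / (qpoch t k * qpoch_shift t a 0 k)"

lemma partitions_gf_0 [simp]: "partitions_gf t a 0 = 1"
  by (simp add: partitions_gf_def qpoch_shift_def)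

lemma partitions_gf_convolution:
  assumes "qpoch t k \<noteq> 0" and "qpoch_shift t a 0 k \<noteq> 0"
  shows "(\<Sum>j\<le>k. partitions_gf t a j / qpoch t (k - j)) = 1 / (qpoch t k * qpoch_shift t a 0 k)"
proof -
  have "partitions_gf t a j / qpoch t (k - j) =
      qbinom t k j * a ^ j * t ^ j\<^sup>2 * qpoch_shift t a j k / (qpoch t k * qpoch_shift t a 0 k)"
    if "j \<le> k" for j
  proof -
    have E: "qpoch_shift t a 0 k = qpoch_shift t a 0 j * qpoch_shift t a j k"
      using qpoch_shift_split[of 0 j k] that by simp
    have P: "qpoch t k = qbinom t k j * qpoch t j * qpoch t (k - j)"
      by (rule qbinom_mult_qpoch[OF that, symmetric])
    show ?thesis
      using assms unfolding partitions_gf_def E P by (simp add: field_simps)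
  qed
  then have "(\<Sum>j\<le>k. partitions_gf t a j / qpoch t (k - j))
      = (\<Sum>j\<le>k. qbinom t k j * a ^ j * t ^ j\<^sup>2 * qpoch_shift t a j k) /
        (qpoch t k * qpoch_shift t a 0 k)"
    by (simp add: sum_divide_distrib)
  then show ?thesis by (simp add: sum_qbinom_qpoch_shift)
qed

lemma partitions_gf_rec:
  assumes "qpoch t k \<noteq> 0" and "qpoch_shift t a 0 k \<noteq> 0" and "a ^ k * t ^ k\<^sup>2 \<noteq> 1"
  shows "partitions_gf t a k
    = a ^ k * t ^ k\<^sup>2 / (1 - a ^ k * t ^ k\<^sup>2) * (\<Sum>j<k. partitions_gf t a j / qpoch t (k - j))"
proof -
  define x where "x = a ^ k * t ^ k\<^sup>2"
  have "partitions_gf t a k = x * (\<Sum>j\<le>k. partitions_gf t a j / qpoch t (k - j))"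
    unfolding partitions_gf_convolution[OF assms(1,2)] by (simp add: partitions_gf_def x_def)
  also have "\<dots> = x * (\<Sum>j<k. partitions_gf t a j / qpoch t (k - j)) + x * partitions_gf t a k"
    by (simp add: lessThan_Suc_atMost[symmetric] algebra_simps)
  finally show ?thesis
    using assms(3) unfolding x_def[symmetric] by (simp add: field_simps)
qed

lemma qpoch_pos: "0 < t \<Longrightarrow> t < (1::'a::linordered_field) \<Longrightarrow> 0 < qpoch t n"
  unfolding qpoch_def by (intro prod_pos) (simp add: power_less_one_iff)

lemma qpoch_shift_pos:
  fixes t a :: "'a::linordered_field"
  assumes "0 \<le> t" "t \<le> 1" "a < 1"
  shows "0 < qpoch_shift t a j k"
  unfolding qpoch_shift_def
proof (intro prod_pos)
  fix r
  have "a * t ^ r < 1"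
  proof (cases "a \<le> 0")
    case True
    then have "a * t ^ r \<le> 0" using assms by (simp add: mult_nonpos_nonneg)
    then show ?thesis by simp
  next
    case False
    then have "a * t ^ r \<le> a" using assms by (simp add: mult_left_le power_le_one)
    then show ?thesis using assms by simp
  qed
  then show "0 < 1 - a * t ^ r" by simp
qed

lemma has_sum_Sigma_nonneg:
  fixes f :: "'a \<Rightarrow> 'b \<Rightarrow> real"
  assumes "\<And>x. x \<in> A \<Longrightarrow> (f x has_sum g x) (B x)" and "(g has_sum s) A"
    and "\<And>x y. x \<in> A \<Longrightarrow> y \<in> B x \<Longrightarrow> 0 \<le> f x y"
  shows "((\<lambda>(x, y). f x y) has_sum s) (Sigma A B)"
  using assms by (intro has_sum_SigmaI summable_on_SigmaI has_sum_imp_summable) auto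

lemma has_sum_geometric_Sigma:
  fixes x :: real and c g :: "nat \<Rightarrow> real" and h :: "'a \<Rightarrow> real"
  assumes "0 \<le> x" "x < 1" and "\<And>j. j < k \<Longrightarrow> (h has_sum g j) (B j)"
    and "\<And>j. 0 \<le> c j" and "\<And>y. 0 \<le> h y"
  shows "((\<lambda>(a, j, y). x ^ a * h y / c j) has_sum x / (1 - x) * (\<Sum>j<k. g j / c j))
    ({1..} \<times> Sigma {..<k} B)"
proof (rule has_sum_Sigma_nonneg)
  show "((\<lambda>(j, y). x ^ a * h y / c j) has_sum x ^ a * (\<Sum>j<k. g j / c j)) (Sigma {..<k} B)"
    for a
  proof (rule has_sum_Sigma_nonneg)
    show "((\<lambda>y. x ^ a * h y / c j) has_sum x ^ a * g j / c j) (B j)" if "j \<in> {..<k}" for j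
      using has_sum_cmult_right[OF assms(3), of j "x ^ a / c j"] that by simp
    show "((\<lambda>j. x ^ a * g j / c j) has_sum x ^ a * (\<Sum>j<k. g j / c j)) {..<k}"
      by (simp add: sum_distrib_left)
  qed (use assms in simp)
  show "((\<lambda>a. x ^ a * (\<Sum>j<k. g j / c j)) has_sum x / (1 - x) * (\<Sum>j<k. g j / c j)) {1..}"
    using has_sum_geometric_from_1[of x] assms(1,2) by (intro has_sum_cmult_left) simp
qed (use assms in \<open>auto simp: case_prod_beta\<close>)

definition partitions_of_length :: "nat \<Rightarrow> nat multiset set" where
  "partitions_of_length k = {lam. is_partition lam \<and> size lam = k}"

definition part_factor :: "real \<Rightarrow> nat multiset \<Rightarrow> nat \<Rightarrow> real" where
  "part_factor q lam i = q ^ (conj_part lam i)\<^sup>2 * qpoch_inv q (mult_part lam i)"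

definition partition_denom :: "real \<Rightarrow> nat multiset \<Rightarrow> real" where
  "partition_denom q lam = (\<Prod>i\<in>{1..Max_mset lam}. part_factor q lam i)"

definition partition_weight :: "real \<Rightarrow> real \<Rightarrow> nat multiset \<Rightarrow> real" where
  "partition_weight u q lam = u ^ psize lam / partition_denom q lam"

text \<open>On Young diagrams, \<open>add_columns k a mu\<close> adds \<open>a\<close> columns of height \<open>k\<close> to \<open>mu\<close>.
  Every partition with \<open>k\<close> parts arises uniquely so from a partition with fewer parts, \<open>a\<close>
  being its smallest part.\<close>

definition add_columns :: "nat \<Rightarrow> nat \<Rightarrow> nat multiset \<Rightarrow> nat multiset" where
  "add_columns k a mu = replicate_mset (k - size mu) a + image_mset (\<lambda>x. x + a) mu"

definition remove_columns :: "nat multiset \<Rightarrow> nat \<times> nat \<times> nat multiset" where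
  "remove_columns lam =
     (let a = Min_mset lam; mu = image_mset (\<lambda>x. x - a) (filter_mset (\<lambda>x. a < x) lam)
      in (a, size mu, mu))"

lemma member_le_sum_mset: "x \<in># M \<Longrightarrow> x \<le> sum_mset (M :: nat multiset)"
  by (metis le_add1 multi_member_split sum_mset.add_mset)

lemma conj_part_eq_size: "\<forall>x\<in>#lam. i \<le> x \<Longrightarrow> conj_part lam i = size lam"
proof -
  assume "\<forall>x\<in>#lam. i \<le> x"
  then have "filter_mset ((\<le>) i) lam = lam" by (simp add: filter_mset_eq_conv)
  then show ?thesis by (simp add: conj_part_def)
qed

lemma part_factor_eq_1: "\<forall>x\<in>#lam. x < i \<Longrightarrow> part_factor q lam i = 1"
proof -
  assume "\<forall>x\<in>#lam. x < i"
  then have "conj_part lam i = 0" and "mult_part lam i = 0"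
    by (auto simp: conj_part_def mult_part_def filter_mset_eq_conv count_eq_zero_iff)
  then show ?thesis by (simp add: part_factor_def qpoch_inv_def)
qed

lemma partition_denom_eq_prod:
  assumes "\<forall>x\<in>#lam. x \<le> n"
  shows "partition_denom q lam = (\<Prod>i\<in>{1..n}. part_factor q lam i)"
proof (cases "lam = {#}")
  case True
  then show ?thesis by (simp add: partition_denom_def part_factor_eq_1)
next
  case False
  then have "Max_mset lam \<le> n" using assms by simp
  moreover have "part_factor q lam i = 1" if "Max_mset lam < i" for i
    using that by (intro part_factor_eq_1) (auto dest: Max_ge[rotated, OF _ finite_set_mset])
  ultimately show ?thesis unfolding partition_denom_def by (intro prod.mono_neutral_left) auto
qed

lemma size_add_columns: "size mu \<le> k \<Longrightarrow> size (add_columns k a mu) = k"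
  by (simp add: add_columns_def)

lemma is_partition_add_columns:
  "1 \<le> a \<Longrightarrow> is_partition mu \<Longrightarrow> is_partition (add_columns k a mu)"
  by (auto simp: add_columns_def is_partition_def)

lemma psize_add_columns: "size mu \<le> k \<Longrightarrow> psize (add_columns k a mu) = k * a + psize mu"
  by (simp add: add_columns_def psize_def sum_mset.distrib diff_mult_distrib algebra_simps)

lemma conj_part_add_columns_low:
  "size mu \<le> k \<Longrightarrow> i \<le> a \<Longrightarrow> conj_part (add_columns k a mu) i = k"
  by (subst conj_part_eq_size) (auto simp: add_columns_def)

lemma conj_part_add_columns_high:
  "1 \<le> i \<Longrightarrow> conj_part (add_columns k a mu) (i + a) = conj_part mu i"
  by (simp add: conj_part_def add_columns_def filter_mset_image_mset)

lemma mult_part_add_columns_low: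
  "is_partition mu \<Longrightarrow> i \<le> a \<Longrightarrow>
    mult_part (add_columns k a mu) i = (if i = a then k - size mu else 0)"
  by (auto simp: mult_part_def add_columns_def is_partition_def count_image_mset
      intro!: sum.neutral)

lemma mult_part_add_columns_high:
  assumes "1 \<le> i"
  shows "mult_part (add_columns k a mu) (i + a) = mult_part mu i"
proof -
  have "(\<lambda>x. x + a) -` {i + a} = {i}" by auto
  then show ?thesis
    using assms by (auto simp: mult_part_def add_columns_def count_image_mset Int_insert_left not_in_iff)
qed

lemma partition_denom_add_columns:
  assumes "1 \<le> a" and "size mu \<le> k" and "is_partition mu"
  shows "partition_denom q (add_columns k a mu)
    = q ^ (k\<^sup>2 * a) * qpoch_inv q (k - size mu) * partition_denom q mu"
proof -
  define N where "N = psize mu"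
  define lam where "lam = add_columns k a mu"
  have "\<forall>x\<in>#lam. x \<le> a + N" and "\<forall>x\<in>#mu. x \<le> N"
    unfolding lam_def add_columns_def N_def psize_def by (auto dest: member_le_sum_mset)
  note bounds = this[THEN partition_denom_eq_prod]
  have "{1..a+N} = {1..a} \<union> {1+a..N+a}" by auto
  then have "partition_denom q lam = (\<Prod>i\<in>{1..a} \<union> {1+a..N+a}. part_factor q lam i)"
    by (simp add: bounds(1))
  also have "\<dots> = (\<Prod>i\<in>{1..a}. part_factor q lam i) * (\<Prod>i\<in>{1+a..N+a}. part_factor q lam i)"
    by (rule prod.union_disjoint) auto
  also have "(\<Prod>i\<in>{1+a..N+a}. part_factor q lam i) = (\<Prod>i\<in>{1..N}. part_factor q lam (i + a))"
    by (rule prod.shift_bounds_cl_nat_ivl)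
  also have "(\<Prod>i\<in>{1..a}. part_factor q lam i)
      = (\<Prod>i\<in>{1..a}. q ^ k\<^sup>2 * (if i = a then qpoch_inv q (k - size mu) else 1))"
    using assms unfolding lam_def
    by (intro prod.cong) (auto simp: part_factor_def conj_part_add_columns_low
        mult_part_add_columns_low qpoch_inv_def)
  also have "\<dots> = q ^ (k\<^sup>2 * a) * qpoch_inv q (k - size mu)"
    using assms(1) by (simp add: prod.distrib power_mult)
  also have "(\<Prod>i\<in>{1..N}. part_factor q lam (i + a)) = partition_denom q mu"
    unfolding bounds(2) lam_def
    by (intro prod.cong)
      (auto simp: part_factor_def conj_part_add_columns_high mult_part_add_columns_high)
  finally show ?thesis unfolding lam_def .
qed

lemma partition_weight_add_columns:
  assumes "1 \<le> a" and "size mu \<le> k" and "is_partition mu"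
  shows "partition_weight u q (add_columns k a mu)
    = (u ^ k * (1 / q) ^ k\<^sup>2) ^ a * partition_weight u q mu / qpoch_inv q (k - size mu)"
proof -
  have "(u ^ k * (1 / q) ^ k\<^sup>2) ^ a = u ^ (k * a) / q ^ (k\<^sup>2 * a)"
    by (simp add: power_mult power_mult_distrib power_divide)
  then show ?thesis
    unfolding partition_weight_def partition_denom_add_columns[OF assms] psize_add_columns[OF assms(2)]
    by (simp add: power_add)
qed

lemma qpoch_inv_eq_qpoch: "qpoch_inv q n = qpoch (1 / q) n"
  unfolding qpoch_inv_def qpoch_def by (simp add: power_one_over)

lemma partition_weight_nonneg: "1 < q \<Longrightarrow> 0 \<le> u \<Longrightarrow> 0 \<le> partition_weight u q lam"
  unfolding partition_weight_def partition_denom_def part_factor_def qpoch_inv_eq_qpoch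
  by (intro divide_nonneg_pos prod_pos mult_pos_pos qpoch_pos) auto

lemma remove_columns_add_columns:
  assumes "1 \<le> a" and "size mu < k" and "is_partition mu"
  shows "remove_columns (add_columns k a mu) = (a, size mu, mu)"
proof -
  define lam where "lam = add_columns k a mu"
  have "a \<in># lam" and "\<forall>x\<in>#lam. a \<le> x"
    using assms(2) by (auto simp: lam_def add_columns_def)
  then have min: "Min_mset lam = a" by (intro Min_eqI) auto
  have "filter_mset (\<lambda>x. 0 < x) mu = mu"
    using assms(3) by (auto simp: is_partition_def filter_mset_eq_conv intro: gr0I)
  then have "filter_mset (\<lambda>x. a < x) lam = image_mset (\<lambda>x. x + a) mu"
    by (simp add: lam_def add_columns_def filter_mset_image_mset)
  then show ?thesis
    unfolding lam_def[symmetric] remove_columns_def Let_def min by (simp add: multiset.map_comp o_def)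
qed

lemma add_columns_remove_columns:
  assumes "lam \<noteq> {#}" and "remove_columns lam = (a, j, mu)"
  shows "add_columns (size lam) a mu = lam"
proof -
  have a: "a = Min_mset lam"
    and mu: "mu = image_mset (\<lambda>x. x - a) (filter_mset (\<lambda>x. a < x) lam)"
    using assms(2) by (auto simp: remove_columns_def Let_def)
  have above: "image_mset (\<lambda>x. x + a) mu = filter_mset (\<lambda>x. a < x) lam"
    unfolding mu multiset.map_comp o_def by (rule image_mset_cong[where g = id, simplified]) auto
  have "filter_mset (\<lambda>x. x \<noteq> a) lam = filter_mset (\<lambda>x. a < x) lam"
    using a by (intro filter_mset_cong) (auto simp: order.strict_iff_order)
  then have "lam = filter_mset (\<lambda>x. x = a) lam + filter_mset (\<lambda>x. a < x) lam"
    by (metis multiset_partition)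
  moreover have "filter_mset (\<lambda>x. x = a) lam = replicate_mset (size lam - size mu) a"
    by (subst (2) calculation) (simp add: filter_eq_replicate_mset mu)
  ultimately show ?thesis unfolding add_columns_def above by simp
qed

lemma remove_columns_mem:
  assumes "is_partition lam" and "lam \<noteq> {#}"
  shows "remove_columns lam \<in> {1..} \<times> Sigma {..<size lam} partitions_of_length"
proof -
  define a where "a = Min_mset lam"
  define mu where "mu = image_mset (\<lambda>x. x - a) (filter_mset (\<lambda>x. a < x) lam)"
  have "a \<in># lam" using assms(2) by (simp add: a_def)
  then have "1 \<le> a" using assms(1) by (cases a) (auto simp: is_partition_def)
  have "size lam = size (filter_mset (\<lambda>x. a < x) lam) + size (filter_mset (\<lambda>x. \<not> a < x) lam)"
    by (metis multiset_partition size_union)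
  moreover have "a \<in># filter_mset (\<lambda>x. \<not> a < x) lam" using \<open>a \<in># lam\<close> by simp
  ultimately have "size mu < size lam" by (auto simp: mu_def dest: multi_member_split)
  moreover have "is_partition mu" by (auto simp: mu_def is_partition_def)
  ultimately show ?thesis using \<open>1 \<le> a\<close>
    unfolding remove_columns_def Let_def a_def[symmetric] mu_def[symmetric]
    by (simp add: partitions_of_length_def)
qed

lemma has_sum_partitions_of_length_iff:
  assumes "1 \<le> k"
  shows "(f has_sum s) (partitions_of_length k)
    \<longleftrightarrow> ((\<lambda>(a, j, mu). f (add_columns k a mu)) has_sum s)
          ({1..} \<times> Sigma {..<k} partitions_of_length)"
proof (rule has_sum_reindex_bij_witness
    [where i = "\<lambda>(a, j, mu). add_columns k a mu" and j = remove_columns])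
  fix lam assume "lam \<in> partitions_of_length k"
  then have lam: "is_partition lam" "size lam = k" "lam \<noteq> {#}"
    using assms by (auto simp: partitions_of_length_def)
  show "remove_columns lam \<in> {1..} \<times> Sigma {..<k} partitions_of_length"
    using remove_columns_mem[OF lam(1,3)] lam(2) by simp
  show "(case remove_columns lam of (a, j, mu) \<Rightarrow> add_columns k a mu) = lam"
    using add_columns_remove_columns[OF lam(3)] lam(2) by (simp split: prod.split)
  then show "(case remove_columns lam of (a, j, mu) \<Rightarrow> f (add_columns k a mu)) = f lam"
    by (simp add: case_prod_beta)
next
  fix b :: "nat \<times> nat \<times> nat multiset"
  assume "b \<in> {1..} \<times> Sigma {..<k} partitions_of_length"
  then obtain a mu where b: "b = (a, size mu, mu)" "1 \<le> a" "size mu < k" "is_partition mu"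
    by (auto simp: partitions_of_length_def)
  show "remove_columns (case b of (a, j, mu) \<Rightarrow> add_columns k a mu) = b"
    using remove_columns_add_columns[OF b(2-4)] b(1) by simp
  show "(case b of (a, j, mu) \<Rightarrow> add_columns k a mu) \<in> partitions_of_length k"
    using b by (simp add: partitions_of_length_def size_add_columns is_partition_add_columns)
qed simp

lemma has_sum_partition_weight_step:
  assumes "1 < q" and "0 < u" and "u < 1" and "1 \<le> k"
    and IH: "\<And>j. j < k \<Longrightarrow>
      (partition_weight u q has_sum partitions_gf (1 / q) u j) (partitions_of_length j)"
  shows "(partition_weight u q has_sum partitions_gf (1 / q) u k) (partitions_of_length k)"
proof -
  define t where "t = 1 / q"
  have t: "0 < t" "t < 1" using assms(1) by (auto simp: t_def)
  define x where "x = u ^ k * t ^ k\<^sup>2"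
  have "0 \<le> x" using assms t by (simp add: x_def)
  have "x \<le> u ^ k" using assms t by (simp add: x_def mult_left_le power_le_one)
  also have "\<dots> < 1" using assms by (simp add: power_less_one_iff)
  finally have "x < 1" .
  have "qpoch t k \<noteq> 0" and "qpoch_shift t u 0 k \<noteq> 0" and "x \<noteq> 1"
    using qpoch_pos[OF t, of k] qpoch_shift_pos[of t u 0 k] t assms(3) \<open>x < 1\<close> by auto
  then have gf: "partitions_gf t u k = x / (1 - x) * (\<Sum>j<k. partitions_gf t u j / qpoch t (k - j))"
    unfolding x_def by (rule partitions_gf_rec)
  have "((\<lambda>(a, j, mu). x ^ a * partition_weight u q mu / qpoch t (k - j))
      has_sum x / (1 - x) * (\<Sum>j<k. partitions_gf t u j / qpoch t (k - j)))
      ({1..} \<times> Sigma {..<k} partitions_of_length)"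
  proof (rule has_sum_geometric_Sigma)
    show "(partition_weight u q has_sum partitions_gf t u j) (partitions_of_length j)" if "j < k" for j
      using IH[OF that] by (simp add: t_def)
    show "0 \<le> qpoch t j" for j
      using qpoch_pos[OF t] by (simp add: less_imp_le)
    show "0 \<le> partition_weight u q mu" for mu
      using assms by (simp add: partition_weight_nonneg)
  qed fact+
  then have "((\<lambda>(a, j, mu). partition_weight u q (add_columns k a mu)) has_sum partitions_gf t u k)
      ({1..} \<times> Sigma {..<k} partitions_of_length)"
    unfolding gf
    by (rule has_sum_cong[THEN iffD1, rotated])
      (auto simp: partitions_of_length_def partition_weight_add_columns x_def t_def qpoch_inv_eq_qpoch)
  then show ?thesis
    unfolding has_sum_partitions_of_length_iff[OF \<open>1 \<le> k\<close>] t_def .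
qed

lemma has_sum_partition_weight:
  assumes "1 < q" and "0 < u" and "u < 1"
  shows "(partition_weight u q has_sum partitions_gf (1 / q) u k) (partitions_of_length k)"
proof (induction k rule: less_induct)
  case (less k)
  show ?case
  proof (cases "k = 0")
    case True
    have "partitions_of_length 0 = {{#}}"
      by (auto simp: partitions_of_length_def is_partition_def)
    moreover have "partition_weight u q {#} = 1"
      by (simp add: partition_weight_def partition_denom_def psize_def part_factor_eq_1)
    ultimately show ?thesis
      using True by (intro has_sum_finiteI) simp_all
  next
    case False
    then show ?thesis
      using has_sum_partition_weight_step[OF assms] less.IH by simp
  qed
qed

lemma prod_power_diff_eq_qpoch:
  fixes q :: "'a::field"
  assumes "q \<noteq> 0"
  shows "(\<Prod>i<n. q ^ n - q ^ i) = q ^ n\<^sup>2 * qpoch (1 / q) n"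
proof -
  have "(\<Prod>i<n. q ^ n - q ^ i) = (\<Prod>i<n. q ^ n * (1 - (1 / q) ^ (n - i)))"
  proof (intro prod.cong refl)
    fix i assume "i \<in> {..<n}"
    then have "q ^ n = q ^ i * q ^ (n - i)" by (simp flip: power_add)
    then show "q ^ n - q ^ i = q ^ n * (1 - (1 / q) ^ (n - i))"
      using assms by (simp add: field_simps)
  qed
  also have "\<dots> = q ^ n\<^sup>2 * (\<Prod>i<n. 1 - (1 / q) ^ Suc (n - Suc i))"
    by (simp add: prod.distrib power2_eq_square power_mult Suc_diff_Suc)
  also have "(\<Prod>i<n. 1 - (1 / q) ^ Suc (n - Suc i)) = (\<Prod>i<n. 1 - (1 / q) ^ Suc i)"
    by (rule prod.nat_diff_reindex)
  also have "\<dots> = qpoch (1 / q) n"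
    by (simp add: qpoch_def prod.atLeast1_atMost_eq)
  finally show ?thesis .
qed

lemma affine_order_Suc_eq:
  assumes "q \<noteq> 0"
  shows "(q ^ Suc n - 1) * affine_order n q = q ^ (Suc n)\<^sup>2 * qpoch_inv q (Suc n)"
proof -
  have "(\<Prod>i<n. q ^ Suc n - q ^ Suc i) = (\<Prod>i<n. q * (q ^ n - q ^ i))"
    by (simp add: right_diff_distrib)
  then have "(q ^ Suc n - 1) * affine_order n q = (q ^ Suc n - q ^ 0) * (\<Prod>i<n. q ^ Suc n - q ^ Suc i)"
    by (simp add: affine_order_def prod.distrib)
  also have "\<dots> = (\<Prod>i<Suc n. q ^ Suc n - q ^ i)"
    by (simp only: prod.lessThan_Suc_shift)
  also have "\<dots> = q ^ (Suc n)\<^sup>2 * qpoch (1 / q) (Suc n)"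
    by (rule prod_power_diff_eq_qpoch[OF assms])
  finally show ?thesis
    by (simp only: qpoch_inv_eq_qpoch)
qed

lemma conj_part_1_eq_size: "is_partition lam \<Longrightarrow> conj_part lam 1 = size lam"
  by (rule conj_part_eq_size) (metis is_partition_def less_one not_less)

lemma N_uq_eq_partition_weight:
  assumes "is_partition lam" and "lam \<noteq> {#}" and "u \<noteq> 0"
  shows "N_uq u q lam = Pinf u q * (q ^ size lam - 1) / u * partition_weight u q lam"
proof -
  obtain x where "x \<in># lam" using assms(2) by blast
  then have "1 \<le> psize lam"
    using assms(1) member_le_sum_mset[of x lam] by (cases x) (auto simp: is_partition_def psize_def)
  then have "u ^ (psize lam - 1) = u ^ psize lam / u"
    using assms(3) by (simp add: power_diff)
  then show ?thesis
    unfolding N_uq_def conj_part_1_eq_size[OF assms(1)]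
    by (simp add: partition_weight_def partition_denom_def part_factor_def)
qed

lemma partitions_gf_eq_affine_order:
  assumes "1 < q" and "0 < u" and "u < 1" and "1 \<le> k"
  shows "(q ^ k - 1) / u * partitions_gf (1 / q) u k
    = u ^ (k - 1) / (affine_order (k - 1) q * (\<Prod>r=1..k. 1 - u / q ^ r))"
proof -
  define P where "P = (\<Prod>r=1..k. 1 - u / q ^ r)"
  define A where "A = affine_order (k - 1) q"
  have "P > 0"
    using qpoch_shift_pos[of "1 / q" u 0 k] assms by (simp add: P_def qpoch_shift_def power_one_over)
  have gf: "partitions_gf (1 / q) u k = u ^ k / (q ^ k\<^sup>2 * qpoch_inv q k * P)"
    by (simp add: partitions_gf_def P_def qpoch_shift_def qpoch_inv_eq_qpoch power_one_over)
  have denom: "q ^ k\<^sup>2 * qpoch_inv q k = (q ^ k - 1) * A"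
    using affine_order_Suc_eq[of q "k - 1"] assms by (simp add: A_def)
  have "q ^ k\<^sup>2 * qpoch_inv q k > 0"
    using qpoch_pos[of "1 / q"] assms by (simp add: qpoch_inv_eq_qpoch)
  then have "A \<noteq> 0" unfolding denom by auto
  have "q ^ k > 1" using assms by simp
  have "(q ^ k - 1) / u * partitions_gf (1 / q) u k
      = (q ^ k - 1) / u * (u * u ^ (k - 1) / ((q ^ k - 1) * A * P))"
    unfolding gf denom using assms(4) by (simp flip: power_Suc)
  also have "\<dots> = u ^ (k - 1) / (A * P)"
    using \<open>A \<noteq> 0\<close> \<open>P > 0\<close> \<open>q ^ k > 1\<close> assms(2) by (simp add: field_simps)
  finally show ?thesis unfolding A_def P_def .
qed

theorem theorem4p2:
  fixes q u :: real and k :: nat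
  assumes "q > 1" and "0 < u" and "u < 1" and "k \<ge> 1"
  shows "(N_uq u q has_sum
           (u ^ (k - 1) / affine_order (k - 1) q *
            (Pinf u q / (\<Prod>r=1..k. 1 - u / q ^ r))))
         {lam. is_partition lam \<and> conj_part lam 1 = k}"
proof -
  define K where "K = Pinf u q * (q ^ k - 1) / u"
  have domain: "{lam. is_partition lam \<and> conj_part lam 1 = k} = partitions_of_length k"
    using conj_part_1_eq_size by (auto simp: partitions_of_length_def)
  have "N_uq u q lam = K * partition_weight u q lam" if "lam \<in> partitions_of_length k" for lam
  proof -
    have "is_partition lam" and "lam \<noteq> {#}" and "size lam = k"
      using that assms(4) by (auto simp: partitions_of_length_def)
    then show ?thesis using assms(2) by (simp add: N_uq_eq_partition_weight K_def)
  qed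
  then have "(N_uq u q has_sum K * partitions_gf (1 / q) u k) (partitions_of_length k)"
    using has_sum_cmult_right[OF has_sum_partition_weight[OF assms(1-3)], of K]
    by (simp cong: has_sum_cong)
  moreover have "K * partitions_gf (1 / q) u k
      = u ^ (k - 1) / affine_order (k - 1) q * (Pinf u q / (\<Prod>r=1..k. 1 - u / q ^ r))"
    using partitions_gf_eq_affine_order[OF assms] by (simp add: K_def divide_inverse ac_simps)
  ultimately show ?thesis unfolding domain by simp
qed

end
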